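(* Let $n\ge 2$, let $\Delta_n^\circ=\{\mathbf{s}\in\mathbb{R}^n: s_i>0 \text{ for all } i,\ \sum_i s_i=1\}$, let $\partial\Delta_n=\{\mathbf{s}\in\mathbb{R}^n: s_i\ge 0\ \forall i,\ \sum_i s_i=1,\ s_i=0\text{ for some } i\}$, and for $\mathbf{s}\in\mathbb{R}^n$ let $M(\mathbf{s})=\operatorname{Diag}(\mathbf{s})-\mathbf{s}\mathbf{s}^\top$. Let $\sigma_1:\mathbb{R}^n\to\Delta_n^\circ$ be the softmax map $\sigma_1(\mathbf{x})_i=e^{x_i}/\sum_{j}e^{x_j}$, whose Jacobian at $\mathbf{x}$ is $J_{\sigma_1}(\mathbf{x})=M(\sigma_1(\mathbf{x}))$, so that $\sup_{\mathbf{x}\in\mathbb{R}^n}\|J_{\sigma_1}(\mathbf{x})\|_p=\sup_{\mathbf{s}\in\Delta_n^\circ}\|M(\mathbf{s})\|_p$. (a) For $p=1$ or $p=\infty$, this supremum equals $1/2$ and is attained at a point of $\Delta_n^\circ$; in particular, for $\mathbf{x}=(\ln(n-1),0,\dots,0)\in\mathbb{R}^n$, the point $\mathbf{s}=\sigma_1(\mathbf{x})$ lies in $\Delta_n^\circ$ and $\|M(\mathbf{s})\|_p=1/2$. (b) For $p\in(1,\infty)$, the supremum again equals $1/2$. If $n>2$, it is not attained in $\Delta_n^\circ$ (i.e. $\|M(\mathbf{s})\|_p<1/2$ for every $\mathbf{s}\in\Delta_n^\circ$), and there exists a sequence $(\mathbf{s}_k)_{k\ge1}\subset\Delta_n^\circ$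 converging to a point of $\partial\Delta_n$, with $\mathbf{s}_k=\sigma_1(\mathbf{x}_k)$ for some $\mathbf{x}_k\in\mathbb{R}^n$, such that $\lim_{k\to\infty}\|M(\mathbf{s}_k)\|_p=1/2$. If $n=2$, the supremum $1/2$ is attained at a point of $\Delta_2^\circ$.
   Context: For $p\in[1,\infty)$, $\|\mathbf{x}\|_p=(\sum_i|x_i|^p)^{1/p}$ and $\|\mathbf{x}\|_\infty=\max_i|x_i|$; for a square matrix $A$, $\|A\|_p=\sup_{\mathbf{v}\ne0}\|A\mathbf{v}\|_p/\|\mathbf{v}\|_p$ is the induced operator norm. $\operatorname{Diag}(\mathbf{s})$ is the diagonal matrix with diagonal $\mathbf{s}$. *)

theory Defs
  imports "HOL-Analysis.Analysis"
begin

definition pnorm :: "ereal \<Rightarrow> real^'n \<Rightarrow> real" where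
  "pnorm p x = (if p = \<infinity> then Max (range (\<lambda>i. \<bar>x $ i\<bar>))
                else (\<Sum>i\<in>UNIV. \<bar>x $ i\<bar> powr real_of_ereal p) powr (1 / real_of_ereal p))"

definition opnorm :: "ereal \<Rightarrow> real^'n^'n \<Rightarrow> real" where
  "opnorm p A = Sup {pnorm p (A *v v) / pnorm p v | v. v \<noteq> 0}"

definition Mmat :: "real^'n \<Rightarrow> real^'n^'n" where
  "Mmat s = (\<chi> i j. (if i = j then s $ i else 0) - s $ i * s $ j)"

definition softmax :: "real^'n \<Rightarrow> real^'n" where
  "softmax x = (\<chi> i. exp (x $ i) / (\<Sum>j\<in>UNIV. exp (x $ j)))"

definition open_simplex :: "(real^'n) set" where
  "open_simplex = {s. (\<forall>i. s $ i > 0) \<and> (\<Sum>i\<in>UNIV. s $ i) = 1}"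

definition simplex_boundary :: "(real^'n) set" where
  "simplex_boundary = {s. (\<forall>i. s $ i \<ge> 0) \<and> (\<Sum>i\<in>UNIV. s $ i) = 1 \<and> (\<exists>i. s $ i = 0)}"

end

theory Submission
  imports Defs "HOL-Real_Asymp.Real_Asymp"
begin

text \<open>For \<open>s\<close> in the open simplex, row \<open>i\<close> and column \<open>i\<close> of \<open>M(s)\<close> both have absolute sum
  \<open>2 s\<^sub>i (1 - s\<^sub>i) \<le> 1/2\<close>, so the Schur test (Jensen's inequality applied row by row) gives
  \<open>\<parallel>M(s)\<parallel>\<^sub>p \<le> 1/2\<close> for every \<open>p \<ge> 1\<close>. For \<open>1 < p < \<infinity>\<close> and \<open>n > 2\<close> not all \<open>s\<^sub>i\<close> can
  equal \<open>1/2\<close>, and since all entries of \<open>M(s)\<close> are nonzero the Schur bound becomes strict.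
  Conversely, if \<open>s\<^sub>a = s\<^sub>b\<close> then \<open>e\<^sub>a - e\<^sub>b\<close> is an eigenvector of \<open>M(s)\<close> with eigenvalue
  \<open>s\<^sub>a\<close>; taking logits \<open>ln (k + 1)\<close> at \<open>a\<close> and \<open>b\<close> and \<open>0\<close> elsewhere makes \<open>s\<^sub>a = s\<^sub>b \<longrightarrow> 1/2\<close>,
  which gives the supremum. For \<open>p = 1\<close> the vector \<open>e\<^sub>i\<close>, and for \<open>p = \<infinity>\<close> the sign vector
  that is \<open>1\<close> at \<open>i\<close> and \<open>-1\<close> elsewhere, show \<open>\<parallel>M(s)\<parallel>\<^sub>p \<ge> 2 s\<^sub>i (1 - s\<^sub>i)\<close>, so there the value
  \<open>1/2\<close> is attained as soon as one coordinate equals \<open>1/2\<close>.\<close>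

lemma pnorm_ereal: "pnorm (ereal r) v = (\<Sum>i\<in>UNIV. \<bar>v $ i\<bar> powr r) powr (1 / r)"
  by (simp add: pnorm_def)

lemma pnorm_one: "pnorm 1 v = (\<Sum>i\<in>UNIV. \<bar>v $ i\<bar>)"
  by (simp add: pnorm_def one_ereal_def sum_nonneg)

lemma abs_le_pnorm_infinity: "\<bar>v $ i\<bar> \<le> pnorm \<infinity> v"
  by (simp add: pnorm_def)

lemma pnorm_nonneg: "0 \<le> pnorm p v"
  by (metis abs_ge_zero abs_le_pnorm_infinity order_trans pnorm_def powr_ge_zero)

lemma pnorm_pos:
  assumes "v \<noteq> 0" "0 < p"
  shows "0 < pnorm p v"
proof -
  obtain i where i: "v $ i \<noteq> 0"
    using assms(1) by (auto simp: vec_eq_iff)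
  show ?thesis
  proof (cases p)
    case (real r)
    have "0 < \<bar>v $ i\<bar> powr r"
      using i by simp
    also have "\<dots> \<le> (\<Sum>j\<in>UNIV. \<bar>v $ j\<bar> powr r)"
      by (rule member_le_sum) auto
    finally show ?thesis
      using real by (simp add: pnorm_ereal)
  next
    case PInf
    then show ?thesis
      using i abs_le_pnorm_infinity[of v i] by simp
  qed (use assms(2) in simp)
qed

lemma pnorm_scaleR:
  assumes "0 \<le> c" "0 < p"
  shows "pnorm p (c *\<^sub>R v) = c * pnorm p v"
proof (cases p)
  case (real r)
  then have "0 < r"
    using assms(2) by simp
  have "(\<Sum>i\<in>UNIV. \<bar>(c *\<^sub>R v) $ i\<bar> powr r) = c powr r * (\<Sum>i\<in>UNIV. \<bar>v $ i\<bar> powr r)"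
    using assms(1) by (simp add: abs_mult powr_mult sum_distrib_left)
  then show ?thesis
    using real assms(1) \<open>0 < r\<close> by (simp add: pnorm_ereal powr_mult powr_powr sum_nonneg)
next
  case PInf
  have "mono ((*) c)"
    using assms(1) by (auto intro: monoI mult_left_mono)
  moreover have "range (\<lambda>i. \<bar>(c *\<^sub>R v) $ i\<bar>) = (*) c ` range (\<lambda>i. \<bar>v $ i\<bar>)"
    using assms(1) by (auto simp: abs_mult image_image)
  ultimately show ?thesis
    using PInf by (simp add: pnorm_def mono_Max_commute)
qed (use assms(2) in simp)

lemma ratio_le_of_pnorm_bound:
  assumes "0 < p" "v \<noteq> 0" "\<And>v. pnorm p (A *v v) \<le> K * pnorm p v"
  shows "pnorm p (A *v v) / pnorm p v \<le> K"
  using assms pnorm_pos[OF assms(2,1)] by (simp add: divide_le_eq)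

lemma opnorm_le:
  assumes "0 < p" "\<And>v. pnorm p (A *v v) \<le> K * pnorm p v"
  shows "opnorm p A \<le> K"
  unfolding opnorm_def
proof (rule cSup_least)
  have "(1 :: real^'n) \<noteq> 0"
    by (simp add: vec_eq_iff)
  then show "{pnorm p (A *v v) / pnorm p v |v. v \<noteq> 0} \<noteq> {}"
    by blast
qed (use assms ratio_le_of_pnorm_bound in blast)

text \<open>\<open>opnorm\<close> is a supremum in \<open>real\<close>, which says nothing about sets that are not bounded
  above; the bound \<open>K\<close> supplies boundedness.\<close>

lemma ratio_le_opnorm:
  assumes "0 < p" "\<And>v. pnorm p (A *v v) \<le> K * pnorm p v" "v \<noteq> 0"
  shows "pnorm p (A *v v) / pnorm p v \<le> opnorm p A"
  unfolding opnorm_def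
proof (rule cSup_upper)
  show "bdd_above {pnorm p (A *v v) / pnorm p v |v. v \<noteq> 0}"
    using assms(1,2) ratio_le_of_pnorm_bound[of p _ A K] by (intro bdd_aboveI) blast
qed (use assms(3) in blast)

lemma eigenvalue_le_opnorm:
  assumes "0 < p" "\<And>v. pnorm p (A *v v) \<le> K * pnorm p v"
    and "v \<noteq> 0" "A *v v = c *\<^sub>R v" "0 \<le> c"
  shows "c \<le> opnorm p A"
  using ratio_le_opnorm[OF assms(1-3)] pnorm_pos[OF assms(3,1)]
  by (simp add: assms(4) pnorm_scaleR[OF assms(5,1)])

lemma convex_on_powr_nonneg:
  assumes r: "1 \<le> r"
  shows "convex_on {0..} (\<lambda>x::real. x powr r)"
proof (rule convex_onI)
  have shrink: "(a * z) powr r \<le> a * z powr r" if "0 \<le> a" "a \<le> 1" "0 \<le> z" for a z :: real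
  proof -
    have "a powr r \<le> a"
      using that r powr_le_one_le[of a r] by (cases "a = 0") auto
    then show ?thesis
      using that by (simp add: powr_mult mult_right_mono)
  qed
  fix t x y :: real
  assume t: "0 < t" "t < 1" and xy: "x \<in> {0..}" "y \<in> {0..}"
  consider "0 < x" "0 < y" | "x = 0" | "y = 0"
    using xy by fastforce
  then show "((1 - t) *\<^sub>R x + t *\<^sub>R y) powr r \<le> (1 - t) * x powr r + t * y powr r"
  proof cases
    case 1
    then show ?thesis
      using convex_onD[OF powr_convex[OF r], of t x y] t by simp
  next
    case 2
    then show ?thesis
      using shrink[of t y] t xy r by simp
  next
    case 3
    then show ?thesis
      using shrink[of "1 - t" x] t xy r by simp
  qed
qed simp

lemma powr_weighted_sum_le:
  fixes w y :: "'a \<Rightarrow> real"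
  assumes "finite S" "\<And>j. j \<in> S \<Longrightarrow> 0 \<le> w j" "\<And>j. j \<in> S \<Longrightarrow> 0 \<le> y j" "1 \<le> r"
  shows "(\<Sum>j\<in>S. w j * y j) powr r \<le> (\<Sum>j\<in>S. w j) powr (r - 1) * (\<Sum>j\<in>S. w j * y j powr r)"
proof (cases "(\<Sum>j\<in>S. w j) = 0")
  case True
  then have "\<forall>j\<in>S. w j = 0"
    using assms(1,2) sum_nonneg_eq_0_iff by blast
  then show ?thesis
    using assms(4) by simp
next
  case False
  define W where "W = (\<Sum>j\<in>S. w j)"
  have W: "0 < W"
    using False assms(2) by (simp add: W_def order_le_neq_trans sum_nonneg)
  have "S \<noteq> {}"
    using False by auto
  have "(\<Sum>j\<in>S. (w j / W) *\<^sub>R y j) powr r \<le> (\<Sum>j\<in>S. (w j / W) * y j powr r)"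
    by (rule convex_on_sum[OF assms(1) \<open>S \<noteq> {}\<close> convex_on_powr_nonneg[OF assms(4)]])
       (use assms W in \<open>auto simp: W_def sum_divide_distrib[symmetric]\<close>)
  then have "(\<Sum>j\<in>S. w j * y j) powr r / W powr r \<le> (\<Sum>j\<in>S. w j * y j powr r) / W"
    using W assms by (simp add: sum_divide_distrib[symmetric] powr_divide sum_nonneg)
  then show ?thesis
    using W by (simp add: W_def[symmetric] powr_diff field_simps)
qed

lemma abs_matrix_vector_le:
  fixes A :: "real^'n^'m"
  shows "\<bar>(A *v v) $ i\<bar> \<le> (\<Sum>j\<in>UNIV. \<bar>A $ i $ j\<bar> * \<bar>v $ j\<bar>)"
  unfolding matrix_vector_mult_def using sum_abs[of "\<lambda>j. A $ i $ j * v $ j" UNIV]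
  by (simp add: abs_mult)

text \<open>Schur test: Jensen's inequality in each row, with the entries \<open>\<bar>a\<^sub>i\<^sub>j\<bar>\<close> as weights, followed by
  an exchange of the two summations.\<close>

lemma sum_powr_matrix_vector_le:
  fixes A :: "real^'n^'m"
  assumes "1 \<le> r"
  shows "(\<Sum>i\<in>UNIV. \<bar>(A *v v) $ i\<bar> powr r)
    \<le> (\<Sum>j\<in>UNIV. (\<Sum>i\<in>UNIV. (\<Sum>k\<in>UNIV. \<bar>A $ i $ k\<bar>) powr (r - 1) * \<bar>A $ i $ j\<bar>)
                 * \<bar>v $ j\<bar> powr r)"
proof -
  have row: "\<bar>(A *v v) $ i\<bar> powr r
      \<le> (\<Sum>k\<in>UNIV. \<bar>A $ i $ k\<bar>) powr (r - 1) * (\<Sum>j\<in>UNIV. \<bar>A $ i $ j\<bar> * \<bar>v $ j\<bar> powr r)" for i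
  proof -
    have "\<bar>(A *v v) $ i\<bar> powr r \<le> (\<Sum>j\<in>UNIV. \<bar>A $ i $ j\<bar> * \<bar>v $ j\<bar>) powr r"
      using abs_matrix_vector_le assms by (intro powr_mono2) auto
    also have "\<dots> \<le> (\<Sum>k\<in>UNIV. \<bar>A $ i $ k\<bar>) powr (r - 1) * (\<Sum>j\<in>UNIV. \<bar>A $ i $ j\<bar> * \<bar>v $ j\<bar> powr r)"
      by (rule powr_weighted_sum_le) (use assms in auto)
    finally show ?thesis .
  qed
  have "(\<Sum>i\<in>UNIV. \<bar>(A *v v) $ i\<bar> powr r)
      \<le> (\<Sum>i\<in>UNIV. (\<Sum>k\<in>UNIV. \<bar>A $ i $ k\<bar>) powr (r - 1) * (\<Sum>j\<in>UNIV. \<bar>A $ i $ j\<bar> * \<bar>v $ j\<bar> powr r))"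
    by (rule sum_mono) (rule row)
  also have "\<dots> = (\<Sum>j\<in>UNIV. (\<Sum>i\<in>UNIV. (\<Sum>k\<in>UNIV. \<bar>A $ i $ k\<bar>) powr (r - 1) * \<bar>A $ i $ j\<bar>)
                 * \<bar>v $ j\<bar> powr r)"
    unfolding sum_distrib_left sum_distrib_right mult.assoc by (rule sum.swap)
  finally show ?thesis .
qed

lemma pnorm_matrix_vector_le_weighted:
  fixes A :: "real^'n^'m"
  assumes r: "1 \<le> r"
    and C: "\<And>j. (\<Sum>i\<in>UNIV. (\<Sum>k\<in>UNIV. \<bar>A $ i $ k\<bar>) powr (r - 1) * \<bar>A $ i $ j\<bar>) \<le> C"
  shows "pnorm (ereal r) (A *v v) \<le> C powr (1 / r) * pnorm (ereal r) v"
proof -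
  have "0 \<le> C"
    by (rule order_trans[OF sum_nonneg C]) simp
  have "(\<Sum>i\<in>UNIV. \<bar>(A *v v) $ i\<bar> powr r) \<le> (\<Sum>j\<in>UNIV. C * \<bar>v $ j\<bar> powr r)"
    by (intro order_trans[OF sum_powr_matrix_vector_le[OF r]] sum_mono mult_right_mono C) auto
  then have "pnorm (ereal r) (A *v v) \<le> (C * (\<Sum>j\<in>UNIV. \<bar>v $ j\<bar> powr r)) powr (1 / r)"
    unfolding pnorm_ereal using r by (intro powr_mono2) (auto simp: sum_distrib_left sum_nonneg)
  also have "\<dots> = C powr (1 / r) * pnorm (ereal r) v"
    unfolding pnorm_ereal using \<open>0 \<le> C\<close> by (simp add: powr_mult sum_nonneg)
  finally show ?thesis .
qed

lemma pnorm_matrix_vector_le_Schur: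
  fixes A :: "real^'n^'m"
  assumes p: "1 \<le> p"
    and rows: "\<And>i. (\<Sum>j\<in>UNIV. \<bar>A $ i $ j\<bar>) \<le> K"
    and cols: "\<And>j. (\<Sum>i\<in>UNIV. \<bar>A $ i $ j\<bar>) \<le> K"
  shows "pnorm p (A *v v) \<le> K * pnorm p v"
proof -
  have "0 \<le> K"
    by (rule order_trans[OF sum_nonneg rows]) simp
  show ?thesis
  proof (cases p)
    case (real r)
    then have r: "1 \<le> r"
      using p by simp
    have "(\<Sum>i\<in>UNIV. (\<Sum>k\<in>UNIV. \<bar>A $ i $ k\<bar>) powr (r - 1) * \<bar>A $ i $ j\<bar>) \<le> K powr r" for j
    proof -
      have "(\<Sum>i\<in>UNIV. (\<Sum>k\<in>UNIV. \<bar>A $ i $ k\<bar>) powr (r - 1) * \<bar>A $ i $ j\<bar>)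
          \<le> (\<Sum>i\<in>UNIV. K powr (r - 1) * \<bar>A $ i $ j\<bar>)"
        using rows r by (intro sum_mono mult_right_mono powr_mono2) (auto intro: sum_nonneg)
      also have "\<dots> \<le> K powr (r - 1) * K"
        using cols by (simp add: sum_distrib_left[symmetric] mult_left_mono)
      also have "\<dots> = K powr r"
        using \<open>0 \<le> K\<close> by (cases "K = 0") (simp_all add: powr_diff)
      finally show ?thesis .
    qed
    then have "pnorm (ereal r) (A *v v) \<le> (K powr r) powr (1 / r) * pnorm (ereal r) v"
      by (rule pnorm_matrix_vector_le_weighted[OF r])
    then show ?thesis
      using real r \<open>0 \<le> K\<close> by (simp add: powr_powr)
  next
    case PInf
    have "\<bar>(A *v v) $ i\<bar> \<le> K * pnorm \<infinity> v" for i
    proof -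
      have "\<bar>(A *v v) $ i\<bar> \<le> (\<Sum>j\<in>UNIV. \<bar>A $ i $ j\<bar> * pnorm \<infinity> v)"
        by (intro order_trans[OF abs_matrix_vector_le] sum_mono mult_left_mono abs_le_pnorm_infinity) auto
      also have "\<dots> \<le> K * pnorm \<infinity> v"
        using rows[of i] pnorm_nonneg[of \<infinity> v] by (simp add: sum_distrib_right[symmetric] mult_right_mono)
      finally show ?thesis .
    qed
    then show ?thesis
      using PInf by (simp add: pnorm_def Max.boundedI)
  qed (use p in simp)
qed

lemma exists_other_index:
  fixes i :: "'n::finite"
  assumes "2 \<le> CARD('n)"
  obtains j where "j \<noteq> i"
proof -
  have "UNIV \<noteq> {i}"
  proof
    assume "UNIV = {i}"
    then have "CARD('n) = card {i}"
      by (rule arg_cong)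
    with assms show False
      by simp
  qed
  then show ?thesis
    using that by blast
qed

lemma open_simplex_le_one:
  assumes "s \<in> open_simplex"
  shows "s $ i \<le> 1"
proof -
  have "s $ i \<le> (\<Sum>j\<in>UNIV. s $ j)"
    by (rule member_le_sum) (use assms in \<open>auto simp: open_simplex_def less_imp_le\<close>)
  then show ?thesis
    using assms by (simp add: open_simplex_def)
qed

lemma sum_open_simplex_remove:
  assumes "s \<in> open_simplex"
  shows "(\<Sum>j\<in>UNIV - {i}. s $ j) = 1 - s $ i"
  using assms sum.remove[of UNIV i "\<lambda>j. s $ j"] by (simp add: open_simplex_def)

lemma open_simplex_less_one:
  assumes s: "s \<in> open_simplex" and n: "2 \<le> CARD('n::finite)"
  shows "(s :: real^'n) $ i < 1"
proof -
  obtain j where "j \<noteq> i"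
    using exists_other_index[OF n] .
  have "s $ j \<le> (\<Sum>k\<in>UNIV - {i}. s $ k)"
    by (rule member_le_sum) (use s \<open>j \<noteq> i\<close> in \<open>auto simp: open_simplex_def less_imp_le\<close>)
  moreover have "0 < s $ j"
    using s by (simp add: open_simplex_def)
  ultimately show ?thesis
    using sum_open_simplex_remove[OF s, of i] by simp
qed

lemma Mmat_mult_vec: "Mmat s *v v = (\<chi> i. s $ i * (v $ i - s \<bullet> v))"
proof -
  have "(Mmat s *v v) $ i = s $ i * (v $ i - s \<bullet> v)" for i
  proof -
    have "(Mmat s *v v) $ i = (\<Sum>j\<in>UNIV. (if i = j then s $ i * v $ j else 0) - s $ i * (s $ j * v $ j))"
      unfolding Mmat_def matrix_vector_mult_def by (auto simp: algebra_simps intro!: sum.cong)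
    also have "\<dots> = s $ i * v $ i - s $ i * (s \<bullet> v)"
      by (simp add: inner_vec_def sum_subtractf sum_distrib_left)
    finally show ?thesis
      by (simp add: algebra_simps)
  qed
  then show ?thesis
    by (simp add: vec_eq_iff)
qed

lemma abs_Mmat:
  assumes "s \<in> open_simplex"
  shows "\<bar>Mmat s $ i $ j\<bar> = (if i = j then s $ i * (1 - s $ i) else s $ i * s $ j)"
proof -
  have "0 < s $ i" "0 < s $ j"
    using assms by (simp_all add: open_simplex_def)
  moreover have "0 \<le> 1 - s $ i"
    using open_simplex_le_one[OF assms, of i] by simp
  ultimately show ?thesis
    by (auto simp: Mmat_def abs_mult algebra_simps simp flip: right_diff_distrib)
qed

lemma Mmat_abs_pos:
  assumes "s \<in> open_simplex" "2 \<le> CARD('n::finite)"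
  shows "0 < \<bar>Mmat (s :: real^'n) $ i $ j\<bar>"
  using open_simplex_less_one[OF assms] assms(1) by (simp add: abs_Mmat open_simplex_def)

lemma Mmat_row_abs_sum:
  assumes "s \<in> open_simplex"
  shows "(\<Sum>j\<in>UNIV. \<bar>Mmat s $ i $ j\<bar>) = 2 * s $ i * (1 - s $ i)"
proof -
  have "(\<Sum>j\<in>UNIV. \<bar>Mmat s $ i $ j\<bar>) = s $ i * (1 - s $ i) + (\<Sum>j\<in>UNIV - {i}. s $ i * s $ j)"
    by (subst sum.remove[of UNIV i]) (auto simp: abs_Mmat[OF assms] intro!: sum.cong)
  also have "\<dots> = 2 * s $ i * (1 - s $ i)"
    by (simp add: sum_distrib_left[symmetric] sum_open_simplex_remove[OF assms])
  finally show ?thesis .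
qed

lemma Mmat_symmetric: "Mmat s $ i $ j = Mmat s $ j $ i"
  by (simp add: Mmat_def mult.commute)

lemma Mmat_column_abs_sum:
  assumes "s \<in> open_simplex"
  shows "(\<Sum>i\<in>UNIV. \<bar>Mmat s $ i $ j\<bar>) = 2 * s $ j * (1 - s $ j)"
  using Mmat_row_abs_sum[OF assms, of j] by (simp add: Mmat_symmetric)

lemma two_mult_one_minus_le_half: "2 * x * (1 - x) \<le> (1/2 :: real)"
  using zero_le_power2[of "2 * x - 1"] by (simp add: power2_eq_square algebra_simps)

lemma two_mult_one_minus_less_half: "x \<noteq> 1/2 \<Longrightarrow> 2 * x * (1 - x) < (1/2 :: real)"
  using zero_less_power2[of "2 * x - 1"] by (simp add: power2_eq_square algebra_simps)

lemma pnorm_Mmat_le: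
  assumes "s \<in> open_simplex" "1 \<le> p"
  shows "pnorm p (Mmat s *v v) \<le> 1/2 * pnorm p v"
proof (rule pnorm_matrix_vector_le_Schur[OF assms(2)])
  show "(\<Sum>j\<in>UNIV. \<bar>Mmat s $ i $ j\<bar>) \<le> 1/2" for i
    unfolding Mmat_row_abs_sum[OF assms(1)] by (rule two_mult_one_minus_le_half)
  show "(\<Sum>i\<in>UNIV. \<bar>Mmat s $ i $ j\<bar>) \<le> 1/2" for j
    unfolding Mmat_column_abs_sum[OF assms(1)] by (rule two_mult_one_minus_le_half)
qed

lemma opnorm_Mmat_le_half:
  assumes "s \<in> open_simplex" "1 \<le> p"
  shows "opnorm p (Mmat s) \<le> 1/2"
  using assms(2) by (intro opnorm_le pnorm_Mmat_le[OF assms]) (cases p; simp)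

text \<open>For \<open>n > 2\<close> some \<open>s\<^sub>i \<noteq> 1/2\<close>, so some row sum of \<open>\<bar>M(s)\<bar>\<close> is below \<open>1/2\<close>; as all
  entries of \<open>M(s)\<close> are nonzero, this lowers every weighted column sum of the Schur test.\<close>

lemma Mmat_weighted_column_sum_less:
  assumes s: "s \<in> open_simplex" and n: "2 < CARD('n::finite)" and r: "1 < r"
  shows "(\<Sum>i\<in>UNIV. (\<Sum>k\<in>UNIV. \<bar>Mmat s $ i $ k\<bar>) powr (r - 1) * \<bar>Mmat (s :: real^'n) $ i $ j\<bar>)
    < (1/2) powr r"
proof -
  define R where "R i = (\<Sum>k\<in>UNIV. \<bar>Mmat s $ i $ k\<bar>)" for i
  have R: "R i = 2 * s $ i * (1 - s $ i)" for i
    by (simp add: R_def Mmat_row_abs_sum[OF s])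
  have R_nonneg: "0 \<le> R i" for i
    by (simp add: R_def sum_nonneg)
  have R_le: "R i \<le> 1/2" for i
    unfolding R by (rule two_mult_one_minus_le_half)
  have "\<not> (\<forall>i. s $ i = 1/2)"
  proof
    assume "\<forall>i. s $ i = 1/2"
    then have "(\<Sum>i\<in>UNIV. s $ i) = (\<Sum>i\<in>(UNIV :: 'n set). 1/2)"
      by (intro sum.cong) auto
    then show False
      using s n by (simp add: open_simplex_def)
  qed
  then obtain i0 where "s $ i0 \<noteq> 1/2"
    by blast
  have R_less: "R i0 < 1/2"
    unfolding R by (rule two_mult_one_minus_less_half) fact
  have "(\<Sum>i\<in>UNIV. R i powr (r - 1) * \<bar>Mmat s $ i $ j\<bar>)
      < (\<Sum>i\<in>UNIV. (1/2) powr (r - 1) * \<bar>Mmat s $ i $ j\<bar>)"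
  proof (rule sum_strict_mono_ex1)
    show "\<forall>i\<in>UNIV. R i powr (r - 1) * \<bar>Mmat s $ i $ j\<bar> \<le> (1/2) powr (r - 1) * \<bar>Mmat s $ i $ j\<bar>"
      using r R_nonneg R_le by (auto intro!: mult_right_mono powr_mono2)
    have "R i0 powr (r - 1) < (1/2) powr (r - 1)"
      using r R_nonneg[of i0] R_less by (intro powr_less_mono2) auto
    then show "\<exists>i\<in>UNIV. R i powr (r - 1) * \<bar>Mmat s $ i $ j\<bar> < (1/2) powr (r - 1) * \<bar>Mmat s $ i $ j\<bar>"
      using Mmat_abs_pos[OF s, of i0 j] n by (intro bexI[of _ i0] mult_strict_right_mono) auto
  qed simp
  also have "\<dots> = (1/2) powr (r - 1) * (2 * s $ j * (1 - s $ j))"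
    by (simp add: sum_distrib_left[symmetric] Mmat_column_abs_sum[OF s])
  also have "\<dots> \<le> (1/2) powr (r - 1) * (1/2)"
    by (intro mult_left_mono two_mult_one_minus_le_half) simp
  also have "\<dots> = (1/2) powr r"
    by (simp add: powr_diff)
  finally show ?thesis
    by (simp add: R_def)
qed

lemma opnorm_Mmat_less_half:
  assumes s: "s \<in> open_simplex" and n: "2 < CARD('n::finite)" and p: "1 < p" "p < \<infinity>"
  shows "opnorm p (Mmat (s :: real^'n)) < 1/2"
proof -
  obtain r where r: "p = ereal r" "1 < r"
    using p by (cases p) auto
  define C where "C j = (\<Sum>i\<in>UNIV. (\<Sum>k\<in>UNIV. \<bar>Mmat s $ i $ k\<bar>) powr (r - 1) * \<bar>Mmat s $ i $ j\<bar>)" for j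
  define c where "c = Max (range C)"
  have "0 \<le> c"
    unfolding c_def by (rule order_trans[OF _ Max_ge[of _ "C undefined"]]) (auto simp: C_def intro!: sum_nonneg)
  have "c < (1/2) powr r"
    using Mmat_weighted_column_sum_less[OF s n r(2)] by (simp add: c_def C_def)
  have "C j \<le> c" for j
    by (simp add: c_def)
  then have "opnorm p (Mmat s) \<le> c powr (1 / r)"
    unfolding r(1) using r(2) by (intro opnorm_le pnorm_matrix_vector_le_weighted) (auto simp: C_def)
  also have "\<dots> < ((1/2) powr r) powr (1 / r)"
    using \<open>0 \<le> c\<close> \<open>c < (1/2) powr r\<close> r by (intro powr_less_mono2) auto
  also have "\<dots> = 1/2"
    using r by (simp add: powr_powr)
  finally show ?thesis .
qed

lemma opnorm_one_Mmat_ge: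
  fixes s :: "real^'n::finite"
  assumes s: "s \<in> open_simplex"
  shows "2 * s $ i * (1 - s $ i) \<le> opnorm 1 (Mmat s)"
proof -
  have "pnorm 1 (Mmat s *v axis i 1) = 2 * s $ i * (1 - s $ i)"
    by (simp add: matrix_vector_mult_basis column_def pnorm_one Mmat_column_abs_sum[OF s])
  moreover have "pnorm 1 (axis i 1 :: real^'n) = 1"
    by (simp add: pnorm_one axis_def if_distrib[of abs] cong: if_cong)
  ultimately show ?thesis
    using ratio_le_opnorm[OF _ pnorm_Mmat_le[OF s], of 1 "axis i 1"] by simp
qed

lemma opnorm_infinity_Mmat_ge:
  fixes s :: "real^'n::finite"
  assumes s: "s \<in> open_simplex"
  shows "2 * s $ i * (1 - s $ i) \<le> opnorm \<infinity> (Mmat s)"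
proof -
  define v :: "real^'n" where "v = (\<chi> j. if j = i then 1 else -1)"
  have "s \<bullet> v = s $ i - (\<Sum>j\<in>UNIV - {i}. s $ j)"
    by (simp add: inner_vec_def v_def sum.remove[of UNIV i] sum_negf[symmetric])
  then have inner_v: "s \<bullet> v = 2 * s $ i - 1"
    using sum_open_simplex_remove[OF s, of i] by simp
  have "v $ i = 1"
    by (simp add: v_def)
  then have "(Mmat s *v v) $ i = 2 * s $ i * (1 - s $ i)"
    unfolding Mmat_mult_vec vec_lambda_beta inner_v by (simp add: algebra_simps)
  moreover have "0 \<le> 2 * s $ i * (1 - s $ i)"
    using s open_simplex_le_one[OF s, of i] by (simp add: open_simplex_def less_imp_le)
  ultimately have "2 * s $ i * (1 - s $ i) \<le> pnorm \<infinity> (Mmat s *v v)"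
    using abs_le_pnorm_infinity[of "Mmat s *v v" i] by simp
  moreover have "pnorm \<infinity> v = 1"
  proof -
    have "range (\<lambda>j. \<bar>v $ j\<bar>) = {1}"
      by (auto simp: v_def)
    then show ?thesis
      by (simp add: pnorm_def)
  qed
  moreover have "v \<noteq> 0"
    by (auto simp: v_def vec_eq_iff)
  ultimately show ?thesis
    using ratio_le_opnorm[OF _ pnorm_Mmat_le[OF s], of \<infinity> v] by fastforce
qed

lemma opnorm_Mmat_eq_half:
  assumes "s \<in> open_simplex" "s $ i = 1/2" "p \<in> {1, \<infinity>}"
  shows "opnorm p (Mmat s) = 1/2"
  using opnorm_one_Mmat_ge[OF assms(1), of i] opnorm_infinity_Mmat_ge[OF assms(1), of i]
    opnorm_Mmat_le_half[OF assms(1), of p] assms(2,3)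
  by auto

lemma Mmat_eigenvector:
  assumes "a \<noteq> b" "s $ a = s $ b"
  shows "Mmat s *v (axis a 1 - axis b 1) = s $ a *\<^sub>R (axis a 1 - axis b 1)"
proof -
  have "s \<bullet> (axis a 1 - axis b 1) = 0"
    using assms(2) by (simp add: inner_diff_right inner_axis)
  then show ?thesis
    using assms by (auto simp: Mmat_mult_vec vec_eq_iff axis_def)
qed

lemma opnorm_Mmat_ge_equal_coordinates:
  assumes "s \<in> open_simplex" "a \<noteq> b" "s $ a = s $ b" "1 \<le> p"
  shows "s $ a \<le> opnorm p (Mmat s)"
proof (rule eigenvalue_le_opnorm[OF _ pnorm_Mmat_le[OF assms(1,4)] _ Mmat_eigenvector[OF assms(2,3)]])
  show "0 < p"
    using assms(4) by (cases p) auto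
qed (use assms in \<open>auto simp: open_simplex_def axis_eq_axis less_imp_le\<close>)

lemma softmax_in_open_simplex: "softmax x \<in> open_simplex"
proof -
  have "0 < (\<Sum>j\<in>UNIV. exp (x $ j))"
    by (simp add: sum_pos)
  then show ?thesis
    by (auto simp: open_simplex_def softmax_def sum_divide_distrib[symmetric])
qed

lemma softmax_peaked_half:
  fixes i0 :: "'n::finite"
  assumes "2 \<le> CARD('n)"
  shows "softmax ((\<chi> i. if i = i0 then ln (real CARD('n) - 1) else 0) :: real^'n) $ i0 = 1/2"
proof -
  define x :: "real^'n" where "x = (\<chi> i. if i = i0 then ln (real CARD('n) - 1) else 0)"
  have n: "0 < real CARD('n) - 1"
    using assms by simp
  have "(\<Sum>j\<in>UNIV. exp (x $ j)) = exp (x $ i0) + (\<Sum>j\<in>UNIV - {i0}. 1)"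
    by (subst sum.remove[of UNIV i0]) (auto simp: x_def)
  also have "\<dots> = 2 * (real CARD('n) - 1)"
    using n by (simp add: x_def card_Diff_singleton)
  finally show ?thesis
    using n by (simp add: softmax_def x_def[symmetric]) (simp add: x_def)
qed

lemma opnorm_Mmat_softmax_peaked:
  fixes i0 :: "'n::finite"
  assumes "2 \<le> CARD('n)" "p \<in> {1, \<infinity>}"
  shows "opnorm p (Mmat (softmax ((\<chi> i. if i = i0 then ln (real CARD('n) - 1) else 0) :: real^'n))) = 1/2"
  by (rule opnorm_Mmat_eq_half[OF softmax_in_open_simplex softmax_peaked_half[OF assms(1)] assms(2)])

definition pair_logits :: "'n::finite \<Rightarrow> 'n \<Rightarrow> nat \<Rightarrow> real^'n" where
  "pair_logits a b k = (\<chi> i. if i = a \<or> i = b then ln (real k + 1) else 0)"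

lemma softmax_pair_logits:
  fixes a b :: "'n::finite"
  assumes "a \<noteq> b"
  shows "softmax (pair_logits a b k)
    = (\<chi> i. (if i = a \<or> i = b then real k + 1 else 1) / (real CARD('n) + 2 * real k))"
proof -
  have "exp (pair_logits a b k $ j) = (if j \<in> {a, b} then real k + 1 else 1)" for j
    by (simp add: pair_logits_def)
  then have "(\<Sum>j\<in>UNIV. exp (pair_logits a b k $ j)) = (\<Sum>j\<in>UNIV. 1 + (if j \<in> {a, b} then real k else 0))"
    by (intro sum.cong) auto
  also have "\<dots> = real CARD('n) + 2 * real k"
    using sum.inter_restrict[of UNIV "\<lambda>_. real k" "{a, b}"] assms by (simp add: sum.distrib)
  finally show ?thesis
    by (simp add: softmax_def vec_eq_iff pair_logits_def)
qed

lemma softmax_pair_logits_tendsto: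
  fixes a b :: "'n::finite"
  assumes "a \<noteq> b"
  shows "(\<lambda>k. softmax (pair_logits a b k)) \<longlonglongrightarrow> (\<chi> i. if i = a \<or> i = b then 1/2 else 0)"
proof -
  have "(\<lambda>k. (real k + 1) / (N + 2 * real k)) \<longlonglongrightarrow> 1/2" "(\<lambda>k. 1 / (N + 2 * real k)) \<longlonglongrightarrow> 0"
    for N :: real
    by real_asymp+
  then show ?thesis
    unfolding softmax_pair_logits[OF assms] by (intro tendsto_vec_lambda) auto
qed

lemma pair_limit_in_simplex_boundary:
  assumes "a \<noteq> b" "2 < CARD('n::finite)"
  shows "((\<chi> i. if i = a \<or> i = b then 1/2 else 0) :: real^'n) \<in> simplex_boundary"
proof -
  have "(\<Sum>i\<in>UNIV. if i \<in> {a, b} then 1/2 else 0) = (1 :: real)"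
    using sum.inter_restrict[of UNIV "\<lambda>_. 1/2 :: real" "{a, b}"] assms(1) by simp
  moreover have "UNIV \<noteq> {a, b}"
    using assms by (metis card_2_iff less_irrefl)
  then obtain c where "c \<notin> {a, b}"
    by blast
  ultimately show ?thesis
    unfolding simplex_boundary_def by (auto intro!: exI[of _ c])
qed

lemma opnorm_Mmat_softmax_pair_logits_tendsto:
  fixes a b :: "'n::finite"
  assumes "a \<noteq> b" "1 \<le> p"
  shows "(\<lambda>k. opnorm p (Mmat (softmax (pair_logits a b k)))) \<longlonglongrightarrow> 1/2"
proof (rule real_tendsto_sandwich[where f = "\<lambda>k. softmax (pair_logits a b k) $ a" and h = "\<lambda>k. 1/2"])
  have "softmax (pair_logits a b k) $ a = softmax (pair_logits a b k) $ b" for k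
    by (simp add: softmax_pair_logits[OF assms(1)])
  then show "\<forall>\<^sub>F k in sequentially. softmax (pair_logits a b k) $ a \<le> opnorm p (Mmat (softmax (pair_logits a b k)))"
    using opnorm_Mmat_ge_equal_coordinates[OF softmax_in_open_simplex assms(1) _ assms(2)] by simp
  show "\<forall>\<^sub>F k in sequentially. opnorm p (Mmat (softmax (pair_logits a b k))) \<le> 1/2"
    by (intro always_eventually allI opnorm_Mmat_le_half softmax_in_open_simplex assms(2))
  show "(\<lambda>k. softmax (pair_logits a b k) $ a) \<longlonglongrightarrow> 1/2"
    using tendsto_vec_nth[OF softmax_pair_logits_tendsto[OF assms(1)], of a] by simp
qed simp

lemma cSUP_eq_limit:
  fixes f :: "'a \<Rightarrow> real"
  assumes "\<And>x. x \<in> A \<Longrightarrow> f x \<le> c" "\<And>k. g k \<in> A" "(\<lambda>k. f (g k)) \<longlonglongrightarrow> c"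
  shows "(SUP x\<in>A. f x) = c"
proof (rule antisym)
  show "(SUP x\<in>A. f x) \<le> c"
    using assms(1,2) by (intro cSUP_least) auto
  have "f (g k) \<le> (SUP x\<in>A. f x)" for k
    using assms(1,2) by (intro cSUP_upper bdd_aboveI2[where M = c]) auto
  then show "c \<le> (SUP x\<in>A. f x)"
    using LIMSEQ_le_const2[OF assms(3)] by blast
qed

lemma SUP_opnorm_Mmat_open_simplex:
  assumes "2 \<le> CARD('n::finite)" "1 \<le> p"
  shows "(SUP s\<in>(open_simplex :: (real^'n) set). opnorm p (Mmat s)) = 1/2"
proof -
  obtain a b :: 'n where "a \<noteq> b"
    by (metis exists_other_index[OF assms(1)])
  show ?thesis
    using opnorm_Mmat_le_half[OF _ assms(2)] softmax_in_open_simplex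
      opnorm_Mmat_softmax_pair_logits_tendsto[OF \<open>a \<noteq> b\<close> assms(2)]
    by (intro cSUP_eq_limit[where g = "\<lambda>k. softmax (pair_logits a b k)"]) auto
qed

lemma SUP_opnorm_Mmat_softmax:
  assumes "2 \<le> CARD('n::finite)" "1 \<le> p"
  shows "(SUP x\<in>(UNIV :: (real^'n) set). opnorm p (Mmat (softmax x))) = 1/2"
proof -
  obtain a b :: 'n where "a \<noteq> b"
    by (metis exists_other_index[OF assms(1)])
  show ?thesis
    using opnorm_Mmat_le_half[OF softmax_in_open_simplex assms(2)]
      opnorm_Mmat_softmax_pair_logits_tendsto[OF \<open>a \<noteq> b\<close> assms(2)]
    by (intro cSUP_eq_limit[where g = "pair_logits a b"]) auto
qed

lemma softmax_sequence_to_boundary: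
  assumes "2 < CARD('n::finite)" "1 \<le> p"
  shows "\<exists>(sk :: nat \<Rightarrow> real^'n) (xk :: nat \<Rightarrow> real^'n) t.
      (\<forall>k\<ge>1. sk k \<in> open_simplex \<and> sk k = softmax (xk k))
      \<and> sk \<longlonglongrightarrow> t \<and> t \<in> simplex_boundary \<and> (\<lambda>k. opnorm p (Mmat (sk k))) \<longlonglongrightarrow> 1/2"
proof -
  obtain a b :: 'n where ab: "a \<noteq> b"
    by (metis exists_other_index less_imp_le[OF assms(1)])
  show ?thesis
    by (rule exI[of _ "\<lambda>k. softmax (pair_logits a b k)"], rule exI[of _ "pair_logits a b"],
        rule exI[of _ "\<chi> i. if i = a \<or> i = b then 1/2 else 0"])
       (use softmax_pair_logits_tendsto[OF ab] pair_limit_in_simplex_boundary[OF ab assms(1)]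
          opnorm_Mmat_softmax_pair_logits_tendsto[OF ab assms(2)] in \<open>simp add: softmax_in_open_simplex\<close>)
qed

lemma opnorm_Mmat_attains_half_if_card_two:
  assumes "CARD('n::finite) = 2" "1 \<le> p"
  shows "\<exists>s\<in>(open_simplex :: (real^'n) set). opnorm p (Mmat s) = 1/2"
proof -
  obtain a b :: 'n where ab: "a \<noteq> b"
    by (metis exists_other_index order_refl assms(1))
  let ?s = "softmax (0 :: real^'n)"
  have half: "?s $ i = 1/2" for i
    using assms(1) by (simp add: softmax_def)
  have "?s $ a \<le> opnorm p (Mmat ?s)"
    by (rule opnorm_Mmat_ge_equal_coordinates[OF softmax_in_open_simplex ab _ assms(2)]) (simp add: half)
  then show ?thesis
    using opnorm_Mmat_le_half[OF softmax_in_open_simplex assms(2)]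
    by (intro bexI[of _ ?s] antisym softmax_in_open_simplex) (simp_all only: half)
qed

theorem proposition2:
  assumes n2: "CARD('n::finite) \<ge> 2"
  shows
   "(\<forall>p \<in> {1, \<infinity>}.
       (SUP x\<in>(UNIV :: (real^'n) set). opnorm p (Mmat (softmax x))) = 1/2
     \<and> (SUP s\<in>(open_simplex :: (real^'n) set). opnorm p (Mmat s)) = 1/2
     \<and> (\<exists>s\<in>(open_simplex :: (real^'n) set). opnorm p (Mmat s) = 1/2)
     \<and> (\<forall>i0::'n. let x = (\<chi> i. if i = i0 then ln (real CARD('n) - 1) else 0) :: real^'n
                  in softmax x \<in> open_simplex \<and> opnorm p (Mmat (softmax x)) = 1/2))
    \<and>
    (\<forall>p::ereal. 1 < p \<and> p < \<infinity> \<longrightarrow>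
       (SUP x\<in>(UNIV :: (real^'n) set). opnorm p (Mmat (softmax x))) = 1/2
     \<and> (SUP s\<in>(open_simplex :: (real^'n) set). opnorm p (Mmat s)) = 1/2
     \<and> (CARD('n) > 2 \<longrightarrow>
          (\<forall>s\<in>(open_simplex :: (real^'n) set). opnorm p (Mmat s) < 1/2)
        \<and> (\<exists>(sk :: nat \<Rightarrow> real^'n) (xk :: nat \<Rightarrow> real^'n) t.
              (\<forall>k\<ge>1. sk k \<in> open_simplex \<and> sk k = softmax (xk k))
            \<and> sk \<longlonglongrightarrow> t \<and> t \<in> simplex_boundary
            \<and> (\<lambda>k. opnorm p (Mmat (sk k))) \<longlonglongrightarrow> 1/2))
     \<and> (CARD('n) = 2 \<longrightarrow>
          (\<exists>s\<in>(open_simplex :: (real^'n) set). opnorm p (Mmat s) = 1/2)))"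
proof -
  have attained: "\<exists>s\<in>(open_simplex :: (real^'n) set). opnorm p (Mmat s) = 1/2" if "p \<in> {1, \<infinity>}" for p
    using softmax_in_open_simplex opnorm_Mmat_softmax_peaked[OF n2 that] by blast
  show ?thesis
    using SUP_opnorm_Mmat_open_simplex[OF n2] SUP_opnorm_Mmat_softmax[OF n2]
      softmax_in_open_simplex opnorm_Mmat_softmax_peaked[OF n2] attained opnorm_Mmat_less_half
      softmax_sequence_to_boundary[where 'n = 'n] opnorm_Mmat_attains_half_if_card_two[where 'n = 'n]
    by (auto simp: Let_def less_imp_le)
qed

end
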